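(* Let $n\ge1$, $H\in\mathbb{R}^{n\times n}$ symmetric positive semidefinite, $h\in\mathbb{R}^n$ with $h\neq0$, $\lambda=\frac{1}{4\sqrt2\|h\|_2}$, and $\epsilon>0$. Let $(z^k,v^k,s^k)_{k\ge0}$ be generated by the predictor–corrector algorithm described in the context, initialized with $z^0=0$, $\gamma^0=\mathbf{1}_n-\lambda h$, $\theta^0=\mathbf{1}_n+\lambda h$, $\phi^0=\psi^0=\mathbf{1}_n$ (so $v^0=(\gamma^0,\theta^0)$, $s^0=(\phi^0,\psi^0)$). Then for every $k$, \[ \mu^{k+1}\le\Big(1-\frac{0.2348}{\sqrt{2n}}\Big)^2\mu^k , \] and the algorithm (which stops at the first $k$ with $(v^k)^\top s^k\le\epsilon$) requires at most \[ N_{\max}=\left\lceil\frac{\log\big(\frac{2n}{\epsilon}\big)}{-2\log\big(1-\frac{0.2348}{\sqrt{2n}}\big)}\right\rceil \] iterations, i.e. $(v^k)^\top s^k\le\epsilon$ holds for all $k\ge N_{\max}$.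
   Context: Box-QP: $\min_{z}\frac12 z^\top Hz+z^\top h$ s.t. $-\mathbf{1}_n\le z\le\mathbf{1}_n$, with objective scaled by $2\lambda$ (which does not change the minimizer). Variables: $z\in\mathbb{R}^n$, $v=(\gamma,\theta)\in\mathbb{R}^{2n}$, $s=(\phi,\psi)\in\mathbb{R}^{2n}$. With $\Omega=[I_n,-I_n]$, the Newton system at $(z,v,s)$ with parameters $\sigma,\mu$ is $(2\lambda H)\Delta z+\Omega\Delta v=0$, $\Omega^\top\Delta z+\Delta s=0$, $s\odot\Delta v+v\odot\Delta s=\sigma\mu\mathbf{1}_{2n}-v\odot s$. Algorithm, iteration $k$: set $\mu^k=\frac{(v^k)^\top s^k}{2n}$; let $(\Delta z_p,\Delta v_p,\Delta s_p)$ solve the Newton system at $(z^k,v^k,s^k)$ with $\sigma=0$, $\mu=\mu^k$; $\Delta\mu_p=\frac{\Delta v_p^\top\Delta s_p}{2n}$; $\alpha^k=\min\big(\frac12,\sqrt{\mu^k/(8\|\Delta v_p\odot\Delta s_p-\Delta\mu_p\mathbf{1}_{2n}\|)}\big)$ (square-root term read as $+\infty$ if the norm is $0$); $(\hat z^k,\hat v^k,\hat s^k)=(z^k,v^k,s^k)+\alpha^k(\Delta z_p,\Delta v_p,\Delta s_p)$; $\hat\mu^k=\frac{(\hat v^k)^\top\hat s^k}{2n}$; let $(\Delta z_c,\Delta v_c,\Delta s_c)$ solve the Newton system at $(\hat z^k,\hat v^k,\hat s^k)$ with $\sigma=1$, $\mu=\hat\mu^k$; $(z^{k+1},v^{k+1},s^{k+1})=(\hat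 z^k,\hat v^k,\hat s^k)+(\Delta z_c,\Delta v_c,\Delta s_c)$. $\odot$ is the Hadamard product, $\mathbf{1}_m$ the all-ones vector, $\|\cdot\|$ the Euclidean norm. *)

theory Defs
  imports "HOL-Analysis.Analysis"
begin

text \<open>A state of the interior point method: (z, gamma, theta, phi, psi), with
  v = (gamma, theta) and s = (phi, psi); all blocks live in R^n = real^'n.\<close>

type_synonym 'n ipm_state =
  "(real^'n) \<times> (real^'n) \<times> (real^'n) \<times> (real^'n) \<times> (real^'n)"

definition ones :: "real^'n" where "ones = (\<chi> i. 1)"

definition vts :: "'n::finite ipm_state \<Rightarrow> real" where
  "vts x = (case x of (z, g, t, f, p) \<Rightarrow> g \<bullet> f + t \<bullet> p)"

definition mu :: "'n::finite ipm_state \<Rightarrow> real" where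
  "mu x = vts x / (2 * real CARD('n))"

text \<open>The Newton system at x with parameters sigma, mu, Omega = [I, -I]:
  (2 lam H) dz + Omega dv = 0, Omega^T dz + ds = 0,
  s .* dv + v .* ds = sigma mu 1 - v .* s.\<close>
definition newton_sys ::
  "real^'n^'n \<Rightarrow> real \<Rightarrow> real \<Rightarrow> real \<Rightarrow> 'n::finite ipm_state \<Rightarrow> 'n ipm_state \<Rightarrow> bool" where
  "newton_sys H lam \<sigma> m x d = (case x of (z, g, t, f, p) \<Rightarrow> case d of (dz, dg, dt, df, dp) \<Rightarrow>
      (2 * lam) *\<^sub>R (H *v dz) + dg - dt = 0 \<and>
      dz + df = 0 \<and> - dz + dp = 0 \<and>
      (\<forall>i. f$i * dg$i + g$i * df$i = \<sigma> * m - g$i * f$i) \<and>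
      (\<forall>i. p$i * dt$i + t$i * dp$i = \<sigma> * m - t$i * p$i))"

definition dev :: "'n::finite ipm_state \<Rightarrow> real" where
  "dev d = (case d of (dz, dg, dt, df, dp) \<Rightarrow>
      sqrt (\<Sum>i\<in>UNIV. (dg$i * df$i - mu d)\<^sup>2 + (dt$i * dp$i - mu d)\<^sup>2))"

text \<open>Step length alpha = min(1/2, sqrt(mu/(8 N))), the square root being +infinity when N = 0.\<close>
definition step_alpha :: "real \<Rightarrow> real \<Rightarrow> real" where
  "step_alpha m N = (if N = 0 then 1/2 else min (1/2) (sqrt (m / (8 * N))))"

definition pc_step :: "real^'n^'n \<Rightarrow> real \<Rightarrow> 'n::finite ipm_state \<Rightarrow> 'n ipm_state \<Rightarrow> bool" where
  "pc_step H lam x x' = (\<exists>dpr dco.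
      newton_sys H lam 0 (mu x) x dpr \<and>
      (let xh = x + step_alpha (mu x) (dev dpr) *\<^sub>R dpr in
        newton_sys H lam 1 (mu xh) xh dco \<and> x' = xh + dco))"

end

theory Submission
  imports Defs
begin

(* Flatten v = (gamma, theta) and s = (phi, psi) into vectors of length m = 2n.  Since H is
   positive semidefinite, every Newton direction satisfies dv^T ds >= 0, and for such directions
   s o dv + v o ds = r implies ||dv o ds|| <= ||(v o s)^(-1/2) o r||^2 / sqrt 8 (Mizuno, Todd, Ye).
   Starting in the neighbourhood ||v o s - mu 1|| <= mu/4 (lambda is chosen so that the initial
   point lies on its boundary, with mu = 1), the predictor step length satisfies
   0.59/sqrt m <= alpha <= 1/2 and leads into the mu/2-neighbourhood with
   mu_hat <= (1 - alpha + alpha^2/4) mu; the corrector returns to the mu/4-neighbourhood with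
   mu' <= (1 + 1/(8m)) mu_hat.  The product of the two factors is at most
   (1 - 0.2348/sqrt m)^2, and the iteration count follows by taking logarithms. *)

section \<open>Inequalities for finite sums\<close>

lemma sum_squares_le_square_sum:
  fixes f :: "'i \<Rightarrow> real"
  assumes "finite A" "\<And>i. i \<in> A \<Longrightarrow> 0 \<le> f i"
  shows "(\<Sum>i\<in>A. (f i)\<^sup>2) \<le> (\<Sum>i\<in>A. f i)\<^sup>2"
proof -
  have "(\<Sum>i\<in>A. (f i)\<^sup>2) \<le> (\<Sum>i\<in>A. f i * (\<Sum>j\<in>A. f j))"
  proof (rule sum_mono)
    fix i assume i: "i \<in> A"
    have "f i \<le> (\<Sum>j\<in>A. f j)" using assms i by (intro member_le_sum) auto
    then show "(f i)\<^sup>2 \<le> f i * (\<Sum>j\<in>A. f j)"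
      using assms(2)[OF i] by (simp add: power2_eq_square mult_left_mono)
  qed
  also have "\<dots> = (\<Sum>i\<in>A. f i)\<^sup>2" by (simp add: sum_distrib_right power2_eq_square)
  finally show ?thesis .
qed

lemma sum_mult_le_sum_square_add:
  fixes p q :: "'i \<Rightarrow> real"
  shows "(\<Sum>i\<in>A. p i * q i) \<le> (\<Sum>i\<in>A. (p i + q i)\<^sup>2) / 4"
proof -
  have "p i * q i \<le> (p i + q i)\<^sup>2 / 4" for i
    using zero_le_power2[of "p i - q i"] by (simp add: power2_eq_square algebra_simps)
  then have "(\<Sum>i\<in>A. p i * q i) \<le> (\<Sum>i\<in>A. (p i + q i)\<^sup>2 / 4)" by (rule sum_mono)
  then show ?thesis by (simp add: sum_divide_distrib)
qed

text \<open>Mizuno, Todd and Ye: the nonnegative terms of \<open>\<Sum>i. p i * q i\<close> dominate the negative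
  ones, so the squares of both parts are bounded by the square of the positive part.\<close>
lemma sum_square_mult_le:
  fixes p q :: "'i \<Rightarrow> real"
  assumes fin: "finite A" and nonneg: "0 \<le> (\<Sum>i\<in>A. p i * q i)"
  shows "(\<Sum>i\<in>A. (p i * q i)\<^sup>2) \<le> (\<Sum>i\<in>A. (p i + q i)\<^sup>2)\<^sup>2 / 8"
proof -
  define P where "P = {i\<in>A. 0 \<le> p i * q i}"
  define Q where "Q = A - P"
  have fin_P: "finite P" and fin_Q: "finite Q" using fin by (auto simp: P_def Q_def)
  have A_split: "A = P \<union> Q" and disj: "P \<inter> Q = {}" by (auto simp: P_def Q_def)
  define a where "a = (\<Sum>i\<in>P. p i * q i)"
  define b where "b = (\<Sum>i\<in>Q. - (p i * q i))"
  have "0 \<le> a" unfolding a_def by (rule sum_nonneg) (auto simp: P_def)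
  have "0 \<le> b" unfolding b_def by (rule sum_nonneg) (auto simp: P_def Q_def)
  have "(\<Sum>i\<in>A. p i * q i) = a - b"
    unfolding a_def b_def A_split by (simp add: sum.union_disjoint[OF fin_P fin_Q disj] sum_negf)
  with nonneg have "b \<le> a" by simp
  have "(\<Sum>i\<in>A. (p i * q i)\<^sup>2) = (\<Sum>i\<in>P. (p i * q i)\<^sup>2) + (\<Sum>i\<in>Q. (- (p i * q i))\<^sup>2)"
    unfolding A_split by (simp add: sum.union_disjoint[OF fin_P fin_Q disj])
  also have "\<dots> \<le> a\<^sup>2 + b\<^sup>2"
    unfolding a_def b_def
    by (intro add_mono sum_squares_le_square_sum fin_P fin_Q) (auto simp: P_def Q_def)
  also have "\<dots> \<le> 2 * a\<^sup>2" using \<open>b \<le> a\<close> \<open>0 \<le> b\<close> by (simp add: power_mono)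
  also have "a \<le> (\<Sum>i\<in>A. (p i + q i)\<^sup>2) / 4"
  proof -
    have "a \<le> (\<Sum>i\<in>P. (p i + q i)\<^sup>2) / 4"
      unfolding a_def by (rule sum_mult_le_sum_square_add)
    also have "(\<Sum>i\<in>P. (p i + q i)\<^sup>2) \<le> (\<Sum>i\<in>A. (p i + q i)\<^sup>2)"
      using fin by (intro sum_mono2) (auto simp: P_def)
    finally show ?thesis by simp
  qed
  then have "2 * a\<^sup>2 \<le> 2 * ((\<Sum>i\<in>A. (p i + q i)\<^sup>2) / 4)\<^sup>2"
    using \<open>0 \<le> a\<close> by (simp add: power_mono)
  finally show ?thesis by (simp add: power2_eq_square)
qed

lemma sum_UNIV_Plus:
  fixes F :: "'a::finite + 'b::finite \<Rightarrow> 'c::comm_monoid_add"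
  shows "(\<Sum>j\<in>UNIV. F j) = (\<Sum>i\<in>UNIV. F (Inl i)) + (\<Sum>i\<in>UNIV. F (Inr i))"
  using sum.Plus[of "UNIV :: 'a set" "UNIV :: 'b set" F] by (simp add: comp_def)

lemma abs_le_L2_set:
  fixes f :: "'i \<Rightarrow> real"
  assumes "finite A" "i \<in> A"
  shows "\<bar>f i\<bar> \<le> L2_set f A"
  using member_le_L2_set[OF assms, of "\<lambda>i. \<bar>f i\<bar>"] by (simp add: L2_set_def)

lemma sum_square_deviation_le:
  fixes d :: "'i::finite \<Rightarrow> real"
  shows "(\<Sum>i\<in>UNIV. (d i - (\<Sum>j\<in>UNIV. d j) / real CARD('i))\<^sup>2) \<le> (\<Sum>i\<in>UNIV. (d i)\<^sup>2)"
proof -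
  define c where "c = (\<Sum>j\<in>UNIV. d j) / real CARD('i)"
  have sum_d: "(\<Sum>j\<in>UNIV. d j) = real CARD('i) * c" by (simp add: c_def)
  have "(\<Sum>i\<in>UNIV. (d i - c)\<^sup>2) = (\<Sum>i\<in>UNIV. (d i)\<^sup>2 - 2 * c * d i + c\<^sup>2)"
    by (rule sum.cong) (auto simp: power2_eq_square algebra_simps)
  also have "\<dots> = (\<Sum>i\<in>UNIV. (d i)\<^sup>2) - real CARD('i) * c\<^sup>2"
    by (simp add: sum.distrib sum_subtractf sum_distrib_left[symmetric] sum_d power2_eq_square)
  finally show ?thesis by (simp add: c_def[symmetric])
qed

lemma scaled_direction_bounds:
  fixes v s u w r :: "'i::finite \<Rightarrow> real"
  assumes pos: "\<And>i. 0 < v i * s i"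
    and eq: "\<And>i. s i * u i + v i * w i = r i"
    and nonneg: "0 \<le> (\<Sum>i\<in>UNIV. u i * w i)"
  shows "(\<Sum>i\<in>UNIV. (u i * w i)\<^sup>2) \<le> (\<Sum>i\<in>UNIV. (r i)\<^sup>2 / (v i * s i))\<^sup>2 / 8"
    and "(\<Sum>i\<in>UNIV. u i * w i) \<le> (\<Sum>i\<in>UNIV. (r i)\<^sup>2 / (v i * s i)) / 4"
proof -
  define p where "p i = s i * u i / sqrt (v i * s i)" for i
  define q where "q i = v i * w i / sqrt (v i * s i)" for i
  have pq: "p i * q i = u i * w i" for i
  proof -
    have "p i * q i = (v i * s i) * (u i * w i) / (sqrt (v i * s i))\<^sup>2"
      by (simp add: p_def q_def power2_eq_square algebra_simps)
    also have "\<dots> = (v i * s i) * (u i * w i) / (v i * s i)" using pos[of i] by simp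
    also have "\<dots> = u i * w i"
      using pos[of i] by (intro nonzero_mult_div_cancel_left) linarith
    finally show ?thesis .
  qed
  have p_plus_q: "(p i + q i)\<^sup>2 = (r i)\<^sup>2 / (v i * s i)" for i
  proof -
    have "p i + q i = r i / sqrt (v i * s i)"
      by (simp add: p_def q_def eq add_divide_distrib[symmetric])
    then show ?thesis using pos[of i] by (simp add: power_divide)
  qed
  show "(\<Sum>i\<in>UNIV. (u i * w i)\<^sup>2) \<le> (\<Sum>i\<in>UNIV. (r i)\<^sup>2 / (v i * s i))\<^sup>2 / 8"
    using sum_square_mult_le[of UNIV p q] nonneg by (simp add: pq p_plus_q)
  show "(\<Sum>i\<in>UNIV. u i * w i) \<le> (\<Sum>i\<in>UNIV. (r i)\<^sup>2 / (v i * s i)) / 4"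
    using sum_mult_le_sum_square_add[of p q UNIV] by (simp add: pq p_plus_q)
qed

section \<open>One predictor-corrector iteration\<close>

definition mean_gap :: "('i::finite \<Rightarrow> real) \<Rightarrow> ('i \<Rightarrow> real) \<Rightarrow> real" where
  "mean_gap v s = (\<Sum>i\<in>UNIV. v i * s i) / real CARD('i)"

definition central_nbhd :: "real \<Rightarrow> ('i::finite \<Rightarrow> real) \<Rightarrow> ('i \<Rightarrow> real) \<Rightarrow> bool" where
  "central_nbhd \<beta> v s \<longleftrightarrow>
     0 < mean_gap v s \<and> L2_set (\<lambda>i. v i * s i - mean_gap v s) UNIV \<le> \<beta> * mean_gap v s"

lemma central_nbhd_product_ge:
  assumes "central_nbhd \<beta> v s"
  shows "(1 - \<beta>) * mean_gap v s \<le> v i * s i"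
proof -
  have "\<bar>v i * s i - mean_gap v s\<bar> \<le> \<beta> * mean_gap v s"
    using abs_le_L2_set[of UNIV i "\<lambda>i. v i * s i - mean_gap v s"] assms
    by (simp add: central_nbhd_def)
  then show ?thesis by (simp add: algebra_simps)
qed

lemma L2_set_product_deviation_sq_le:
  fixes u w :: "'i::finite \<Rightarrow> real"
  shows "(L2_set (\<lambda>i. u i * w i - mean_gap u w) UNIV)\<^sup>2 \<le> (\<Sum>i\<in>UNIV. (u i * w i)\<^sup>2)"
  using sum_square_deviation_le[of "\<lambda>i. u i * w i"]
  by (simp add: L2_set_def mean_gap_def sum_nonneg)

lemma predictor_direction_bounds:
  fixes v s u w :: "'i::finite \<Rightarrow> real"
  assumes pos: "\<And>i. 0 < v i * s i"
    and eq: "\<And>i. s i * u i + v i * w i = - (v i * s i)"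
    and nonneg: "0 \<le> (\<Sum>i\<in>UNIV. u i * w i)"
  shows "(L2_set (\<lambda>i. u i * w i - mean_gap u w) UNIV)\<^sup>2 \<le> (real CARD('i) * mean_gap v s)\<^sup>2 / 8"
    and "mean_gap u w \<le> mean_gap v s / 4"
proof -
  have "(\<Sum>i\<in>UNIV. (- (v i * s i))\<^sup>2 / (v i * s i)) = real CARD('i) * mean_gap v s"
  proof -
    have "(\<Sum>i\<in>UNIV. (- (v i * s i))\<^sup>2 / (v i * s i)) = (\<Sum>i\<in>UNIV. v i * s i)"
      by (rule sum.cong) (use pos in \<open>auto simp: power2_eq_square\<close>)
    then show ?thesis by (simp add: mean_gap_def)
  qed
  note bounds = scaled_direction_bounds[of v s u w, OF pos eq nonneg, unfolded this]
  show "(L2_set (\<lambda>i. u i * w i - mean_gap u w) UNIV)\<^sup>2 \<le> (real CARD('i) * mean_gap v s)\<^sup>2 / 8"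
    using L2_set_product_deviation_sq_le[of u w] bounds(1) by linarith
  show "mean_gap u w \<le> mean_gap v s / 4"
    using bounds(2) by (simp add: mean_gap_def divide_simps mult.commute)
qed

text \<open>The constant 0.59 works because \<open>8 * 0.59\<^sup>4 \<le> 1\<close>.\<close>
lemma step_alpha_bounds:
  fixes m \<mu> N :: real
  assumes m: "2 \<le> m" and \<mu>: "0 < \<mu>" and N: "0 \<le> N" "N\<^sup>2 \<le> (m * \<mu>)\<^sup>2 / 8"
  shows "0.59 / sqrt m \<le> step_alpha \<mu> N" and "step_alpha \<mu> N \<le> 1/2"
    and "(step_alpha \<mu> N)\<^sup>2 * N \<le> \<mu> / 8"
proof -
  have alpha_half: "0.59 / sqrt m \<le> 1/2"
  proof -
    have "(0.59 / sqrt m)\<^sup>2 \<le> (1/2)\<^sup>2" using m by (simp add: power_divide divide_simps)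
    then show ?thesis by (rule power2_le_imp_le) simp
  qed
  show "step_alpha \<mu> N \<le> 1/2" by (auto simp: step_alpha_def)
  show "0.59 / sqrt m \<le> step_alpha \<mu> N"
  proof (cases "N = 0")
    case False
    then have "0 < N" using N by simp
    have "(8 * 0.59\<^sup>2 * N)\<^sup>2 = 64 * 0.59^4 * N\<^sup>2" by (simp add: power2_eq_square power4_eq_xxxx)
    also have "\<dots> \<le> 64 * 0.59^4 * ((m * \<mu>)\<^sup>2 / 8)" using N by simp
    also have "\<dots> = (8 * 0.59^4) * (m * \<mu>)\<^sup>2" by simp
    also have "\<dots> \<le> (m * \<mu>)\<^sup>2" by (intro mult_left_le_one_le) (auto simp: power_divide)
    finally have "8 * 0.59\<^sup>2 * N \<le> m * \<mu>" by (rule power2_le_imp_le) (use m \<mu> in simp)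
    then have "(0.59 / sqrt m)\<^sup>2 \<le> \<mu> / (8 * N)"
      using \<open>0 < N\<close> m by (simp add: power_divide divide_simps mult.commute mult.left_commute)
    then have "0.59 / sqrt m \<le> sqrt (\<mu> / (8 * N))"
      by (metis real_le_rsqrt)
    then show ?thesis using alpha_half False by (simp add: step_alpha_def)
  qed (use alpha_half in \<open>simp add: step_alpha_def\<close>)
  show "(step_alpha \<mu> N)\<^sup>2 * N \<le> \<mu> / 8"
  proof (cases "N = 0")
    case False
    then have "0 < N" using N by simp
    have "step_alpha \<mu> N \<le> sqrt (\<mu> / (8 * N))" using False by (simp add: step_alpha_def)
    moreover have "0 \<le> step_alpha \<mu> N" using \<mu> N by (simp add: step_alpha_def)
    ultimately have "(step_alpha \<mu> N)\<^sup>2 \<le> (sqrt (\<mu> / (8 * N)))\<^sup>2" by (rule power_mono)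
    also have "\<dots> = \<mu> / (8 * N)" using \<mu> \<open>0 < N\<close> by simp
    finally have "(step_alpha \<mu> N)\<^sup>2 \<le> \<mu> / (8 * N)" .
    then show ?thesis using \<open>0 < N\<close> by (simp add: divide_simps mult.commute)
  qed (use \<mu> in simp)
qed

lemma predictor_step:
  fixes v s u w :: "'i::finite \<Rightarrow> real" and \<alpha> :: real
  assumes central: "central_nbhd (1/4) v s"
    and eq: "\<And>i. s i * u i + v i * w i = - (v i * s i)"
    and \<delta>: "0 \<le> mean_gap u w" "mean_gap u w \<le> mean_gap v s / 4"
    and \<alpha>: "0 \<le> \<alpha>" "\<alpha> \<le> 1/2"
      "\<alpha>\<^sup>2 * L2_set (\<lambda>i. u i * w i - mean_gap u w) UNIV \<le> mean_gap v s / 8"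
  shows "central_nbhd (1/2) (\<lambda>i. v i + \<alpha> * u i) (\<lambda>i. s i + \<alpha> * w i)"
    and "mean_gap (\<lambda>i. v i + \<alpha> * u i) (\<lambda>i. s i + \<alpha> * w i) \<le> (1 - \<alpha> + \<alpha>\<^sup>2 / 4) * mean_gap v s"
proof -
  define \<mu> where "\<mu> = mean_gap v s"
  define \<delta> where "\<delta> = mean_gap u w"
  define \<mu>' where "\<mu>' = mean_gap (\<lambda>i. v i + \<alpha> * u i) (\<lambda>i. s i + \<alpha> * w i)"
  have "0 < \<mu>" using central by (simp add: central_nbhd_def \<mu>_def)
  have prod: "(v i + \<alpha> * u i) * (s i + \<alpha> * w i) = (1 - \<alpha>) * (v i * s i) + \<alpha>\<^sup>2 * (u i * w i)" for i
  proof -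
    have "(v i + \<alpha> * u i) * (s i + \<alpha> * w i)
        = v i * s i + \<alpha> * (s i * u i + v i * w i) + \<alpha>\<^sup>2 * (u i * w i)"
      by (simp add: power2_eq_square algebra_simps)
    then show ?thesis by (simp add: eq algebra_simps)
  qed
  have mean: "\<mu>' = (1 - \<alpha>) * \<mu> + \<alpha>\<^sup>2 * \<delta>"
    by (simp add: \<mu>'_def \<mu>_def \<delta>_def mean_gap_def prod sum.distrib
        sum_distrib_left[symmetric] add_divide_distrib)
  have "(1 - \<alpha>) * \<mu> \<le> \<mu>'" using mean \<delta>(1) by (simp add: \<delta>_def)
  moreover have "\<mu> / 2 \<le> (1 - \<alpha>) * \<mu>"
    using mult_right_mono[of "1/2" "1 - \<alpha>" \<mu>] \<alpha>(2) \<open>0 < \<mu>\<close> by simp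
  ultimately have "0 < \<mu>'" using \<open>0 < \<mu>\<close> by linarith
  have "L2_set (\<lambda>i. (v i + \<alpha> * u i) * (s i + \<alpha> * w i) - \<mu>') UNIV
      = L2_set (\<lambda>i. (1 - \<alpha>) * (v i * s i - \<mu>) + \<alpha>\<^sup>2 * (u i * w i - \<delta>)) UNIV"
    unfolding prod mean by (intro L2_set_cong) (simp_all add: algebra_simps)
  also have "\<dots> \<le> L2_set (\<lambda>i. (1 - \<alpha>) * (v i * s i - \<mu>)) UNIV
      + L2_set (\<lambda>i. \<alpha>\<^sup>2 * (u i * w i - \<delta>)) UNIV"
    by (rule L2_set_triangle_ineq)
  also have "\<dots> = (1 - \<alpha>) * L2_set (\<lambda>i. v i * s i - \<mu>) UNIV
      + \<alpha>\<^sup>2 * L2_set (\<lambda>i. u i * w i - \<delta>) UNIV"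
    using \<alpha>(2) by (simp add: L2_set_right_distrib)
  also have "\<dots> \<le> (1 - \<alpha>) * (\<mu> / 4) + \<mu> / 8"
    using central \<alpha> by (intro add_mono mult_left_mono) (auto simp: central_nbhd_def \<mu>_def \<delta>_def)
  also have "\<dots> \<le> \<mu>' / 2" using \<open>(1 - \<alpha>) * \<mu> \<le> \<mu>'\<close> \<open>\<mu> / 2 \<le> (1 - \<alpha>) * \<mu>\<close> by linarith
  finally show "central_nbhd (1/2) (\<lambda>i. v i + \<alpha> * u i) (\<lambda>i. s i + \<alpha> * w i)"
    using \<open>0 < \<mu>'\<close> by (simp add: central_nbhd_def \<mu>'_def)
  have "\<alpha>\<^sup>2 * \<delta> \<le> \<alpha>\<^sup>2 * (\<mu> / 4)" using \<delta>(2) by (intro mult_left_mono) (auto simp: \<delta>_def \<mu>_def)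
  then show "\<mu>' \<le> (1 - \<alpha> + \<alpha>\<^sup>2 / 4) * \<mu>" using mean by (simp add: algebra_simps)
qed

lemma corrector_direction_bounds:
  fixes v s u w :: "'i::finite \<Rightarrow> real"
  assumes central: "central_nbhd (1/2) v s"
    and eq: "\<And>i. s i * u i + v i * w i = mean_gap v s - v i * s i"
    and nonneg: "0 \<le> (\<Sum>i\<in>UNIV. u i * w i)"
  shows "(\<Sum>i\<in>UNIV. (u i * w i)\<^sup>2) \<le> (mean_gap v s / 4)\<^sup>2"
    and "mean_gap u w \<le> mean_gap v s / (8 * real CARD('i))"
proof -
  define \<mu> where "\<mu> = mean_gap v s"
  have "0 < \<mu>" using central by (simp add: central_nbhd_def \<mu>_def)
  have lower: "\<mu> / 2 \<le> v i * s i" for i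
    using central_nbhd_product_ge[OF central, of i] by (simp add: \<mu>_def)
  have pos: "0 < v i * s i" for i using lower[of i] \<open>0 < \<mu>\<close> by linarith
  have "sqrt (\<Sum>i\<in>UNIV. (v i * s i - \<mu>)\<^sup>2) \<le> \<mu> / 2"
    using central by (simp add: central_nbhd_def L2_set_def \<mu>_def)
  then have "(\<Sum>i\<in>UNIV. (v i * s i - \<mu>)\<^sup>2) \<le> (\<mu> / 2)\<^sup>2" by (rule sqrt_le_D)
  then have residual: "(\<Sum>i\<in>UNIV. (\<mu> - v i * s i)\<^sup>2) \<le> (\<mu> / 2)\<^sup>2"
    by (simp add: power2_commute)
  define W where "W = (\<Sum>i\<in>UNIV. (\<mu> - v i * s i)\<^sup>2 / (v i * s i))"
  have "0 \<le> W" unfolding W_def using pos by (intro sum_nonneg) (simp add: less_imp_le)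
  have "W \<le> (\<Sum>i\<in>UNIV. (\<mu> - v i * s i)\<^sup>2 / (\<mu> / 2))"
    unfolding W_def using lower pos \<open>0 < \<mu>\<close> by (intro sum_mono divide_left_mono) auto
  also have "\<dots> \<le> (\<mu> / 2)\<^sup>2 / (\<mu> / 2)"
    unfolding sum_divide_distrib[symmetric] using residual \<open>0 < \<mu>\<close> by (intro divide_right_mono) auto
  also have "\<dots> = \<mu> / 2" using \<open>0 < \<mu>\<close> by (simp add: power2_eq_square)
  finally have "W \<le> \<mu> / 2" .
  note bounds = scaled_direction_bounds[OF pos eq[folded \<mu>_def] nonneg, folded W_def]
  have "(\<Sum>i\<in>UNIV. (u i * w i)\<^sup>2) \<le> W\<^sup>2 / 8" by (rule bounds(1))
  also have "\<dots> \<le> (\<mu> / 2)\<^sup>2 / 8"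
    using \<open>W \<le> \<mu> / 2\<close> \<open>0 \<le> W\<close> by (intro divide_right_mono power_mono) auto
  also have "\<dots> \<le> (\<mu> / 4)\<^sup>2" by (simp add: power2_eq_square)
  finally show "(\<Sum>i\<in>UNIV. (u i * w i)\<^sup>2) \<le> (mean_gap v s / 4)\<^sup>2" by (simp add: \<mu>_def)
  have "(\<Sum>i\<in>UNIV. u i * w i) \<le> \<mu> / 8" using bounds(2) \<open>W \<le> \<mu> / 2\<close> by linarith
  then have "mean_gap u w \<le> \<mu> / 8 / real CARD('i)"
    unfolding mean_gap_def by (rule divide_right_mono) simp
  then show "mean_gap u w \<le> mean_gap v s / (8 * real CARD('i))" by (simp add: \<mu>_def)
qed

lemma corrector_step:
  fixes v s u w :: "'i::finite \<Rightarrow> real"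
  assumes central: "central_nbhd (1/2) v s"
    and eq: "\<And>i. s i * u i + v i * w i = mean_gap v s - v i * s i"
    and nonneg: "0 \<le> (\<Sum>i\<in>UNIV. u i * w i)"
  shows "central_nbhd (1/4) (\<lambda>i. v i + u i) (\<lambda>i. s i + w i)"
    and "mean_gap (\<lambda>i. v i + u i) (\<lambda>i. s i + w i) \<le> (1 + 1 / (8 * real CARD('i))) * mean_gap v s"
proof -
  define \<mu> where "\<mu> = mean_gap v s"
  define \<delta> where "\<delta> = mean_gap u w"
  note direction = corrector_direction_bounds[OF central eq nonneg, folded \<mu>_def \<delta>_def]
  have "0 < \<mu>" using central by (simp add: central_nbhd_def \<mu>_def)
  have "0 \<le> \<delta>" using nonneg by (simp add: \<delta>_def mean_gap_def)
  have prod: "(v i + u i) * (s i + w i) = \<mu> + u i * w i" for i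
    using eq[of i] by (simp add: \<mu>_def algebra_simps)
  have mean: "mean_gap (\<lambda>i. v i + u i) (\<lambda>i. s i + w i) = \<mu> + \<delta>"
    by (simp add: mean_gap_def prod sum.distrib add_divide_distrib \<delta>_def)
  have "(L2_set (\<lambda>i. u i * w i - \<delta>) UNIV)\<^sup>2 \<le> (\<mu> / 4)\<^sup>2"
    using L2_set_product_deviation_sq_le[of u w] direction(1) by (simp add: \<delta>_def)
  then have "L2_set (\<lambda>i. u i * w i - \<delta>) UNIV \<le> \<mu> / 4"
    by (rule power2_le_imp_le) (use \<open>0 < \<mu>\<close> in simp)
  also have "\<dots> \<le> (\<mu> + \<delta>) / 4" using \<open>0 \<le> \<delta>\<close> by simp
  finally show "central_nbhd (1/4) (\<lambda>i. v i + u i) (\<lambda>i. s i + w i)"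
    using \<open>0 < \<mu>\<close> \<open>0 \<le> \<delta>\<close> by (simp add: central_nbhd_def mean prod)
  show "mean_gap (\<lambda>i. v i + u i) (\<lambda>i. s i + w i) \<le> (1 + 1 / (8 * real CARD('i))) * \<mu>"
    using direction(2) unfolding mean by (simp add: algebra_simps)
qed

lemma contraction_factor_bound:
  fixes m \<alpha> :: real
  assumes m: "2 \<le> m" and \<alpha>: "0.59 / sqrt m \<le> \<alpha>" "\<alpha> \<le> 1/2"
  shows "(1 - \<alpha> + \<alpha>\<^sup>2 / 4) * (1 + 1 / (8 * m)) \<le> (1 - 0.2348 / sqrt m)\<^sup>2"
proof -
  define y where "y = 1 / sqrt m"
  have "0 < y" using m by (simp add: y_def)
  have y_sq: "y\<^sup>2 = 1 / m" using m by (simp add: y_def power_divide)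
  have "y \<le> 0.7072"
  proof (rule ccontr)
    assume "\<not> y \<le> 0.7072"
    then have "0.7072 * 0.7072 < y * y" by (intro mult_strict_mono) auto
    moreover have "y * y \<le> 1 / 2" using m by (simp add: y_sq[unfolded power2_eq_square])
    ultimately show False by simp
  qed
  have "1 - \<alpha> + \<alpha>\<^sup>2 / 4 \<le> 1 - 0.59 * y + (0.59 * y)\<^sup>2 / 4"
  proof -
    have "(1 - 0.59 * y + (0.59 * y)\<^sup>2 / 4) - (1 - \<alpha> + \<alpha>\<^sup>2 / 4)
        = (\<alpha> - 0.59 * y) * (1 - (\<alpha> + 0.59 * y) / 4)"
      by (simp add: power2_eq_square field_simps)
    also have "\<dots> \<ge> 0" using \<alpha> \<open>0 < y\<close> by (intro mult_nonneg_nonneg) (auto simp: y_def)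
    finally show ?thesis by simp
  qed
  have "(1 - \<alpha> + \<alpha>\<^sup>2 / 4) * (1 + 1 / (8 * m)) = (1 - \<alpha> + \<alpha>\<^sup>2 / 4) * (1 + y\<^sup>2 / 8)"
    by (simp add: y_sq)
  also have "\<dots> \<le> (1 - 0.59 * y + (0.59 * y)\<^sup>2 / 4) * (1 + y\<^sup>2 / 8)"
    using \<open>1 - \<alpha> + \<alpha>\<^sup>2 / 4 \<le> 1 - 0.59 * y + (0.59 * y)\<^sup>2 / 4\<close> by (rule mult_right_mono) simp
  also have "\<dots> \<le> (1 - 0.2348 * y)\<^sup>2"
  proof -
    have "y\<^sup>2 * (-0.07375 + 0.010878125 * y) \<le> 0"
      using \<open>y \<le> 0.7072\<close> by (intro mult_nonneg_nonpos) auto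
    then have "-0.1204 + 0.15689396 * y - 0.07375 * y\<^sup>2 + 0.010878125 * y^3 \<le> 0"
      using \<open>y \<le> 0.7072\<close> by (simp add: power2_eq_square power3_eq_cube algebra_simps)
    then have "y * (-0.1204 + 0.15689396 * y - 0.07375 * y\<^sup>2 + 0.010878125 * y^3) \<le> 0"
      using \<open>0 < y\<close> by (simp add: mult_nonneg_nonpos)
    moreover have "(1 - 0.59 * y + (0.59 * y)\<^sup>2 / 4) * (1 + y\<^sup>2 / 8) - (1 - 0.2348 * y)\<^sup>2
        = y * (-0.1204 + 0.15689396 * y - 0.07375 * y\<^sup>2 + 0.010878125 * y^3)"
      by (simp add: power2_eq_square power3_eq_cube field_simps)
    ultimately show ?thesis by linarith
  qed
  finally show ?thesis by (simp add: y_def)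
qed

lemma predictor_corrector_step:
  fixes v s u w u' w' :: "'i::finite \<Rightarrow> real" and \<alpha> :: real
  assumes card: "2 \<le> CARD('i)"
    and central: "central_nbhd (1/4) v s"
    and pred: "\<And>i. s i * u i + v i * w i = - (v i * s i)" "0 \<le> (\<Sum>i\<in>UNIV. u i * w i)"
    and \<alpha>: "\<alpha> = step_alpha (mean_gap v s) (L2_set (\<lambda>i. u i * w i - mean_gap u w) UNIV)"
    and corr: "\<And>i. (s i + \<alpha> * w i) * u' i + (v i + \<alpha> * u i) * w' i
        = mean_gap (\<lambda>i. v i + \<alpha> * u i) (\<lambda>i. s i + \<alpha> * w i) - (v i + \<alpha> * u i) * (s i + \<alpha> * w i)"
      "0 \<le> (\<Sum>i\<in>UNIV. u' i * w' i)"
  shows "central_nbhd (1/4) (\<lambda>i. v i + \<alpha> * u i + u' i) (\<lambda>i. s i + \<alpha> * w i + w' i)"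
    and "mean_gap (\<lambda>i. v i + \<alpha> * u i + u' i) (\<lambda>i. s i + \<alpha> * w i + w' i)
      \<le> (1 - 0.2348 / sqrt (real CARD('i)))\<^sup>2 * mean_gap v s"
proof -
  define m where "m = real CARD('i)"
  have "2 \<le> m" using card by (simp add: m_def)
  have "0 < mean_gap v s" using central by (simp add: central_nbhd_def)
  have pos: "0 < v i * s i" for i
    using central_nbhd_product_ge[OF central, of i] \<open>0 < mean_gap v s\<close> by simp
  note direction = predictor_direction_bounds[OF pos pred]
  have "0 \<le> mean_gap u w" using pred(2) by (simp add: mean_gap_def)
  note \<alpha>_bounds = step_alpha_bounds[OF \<open>2 \<le> m\<close> \<open>0 < mean_gap v s\<close> L2_set_nonneg,
      OF direction(1)[folded m_def], folded \<alpha>]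
  have "0 \<le> 0.59 / sqrt m" using \<open>2 \<le> m\<close> by simp
  with \<alpha>_bounds(1) have "0 \<le> \<alpha>" by linarith
  note predicted = predictor_step[OF central pred(1) \<open>0 \<le> mean_gap u w\<close> direction(2)
      \<open>0 \<le> \<alpha>\<close> \<alpha>_bounds(2) \<alpha>_bounds(3)]
  note corrected = corrector_step[OF predicted(1) corr]
  show "central_nbhd (1/4) (\<lambda>i. v i + \<alpha> * u i + u' i) (\<lambda>i. s i + \<alpha> * w i + w' i)"
    by (rule corrected(1))
  have "mean_gap (\<lambda>i. v i + \<alpha> * u i + u' i) (\<lambda>i. s i + \<alpha> * w i + w' i)
      \<le> (1 + 1 / (8 * m)) * mean_gap (\<lambda>i. v i + \<alpha> * u i) (\<lambda>i. s i + \<alpha> * w i)"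
    using corrected(2) by (simp only: m_def)
  also have "\<dots> \<le> (1 + 1 / (8 * m)) * ((1 - \<alpha> + \<alpha>\<^sup>2 / 4) * mean_gap v s)"
    using predicted(2) \<open>2 \<le> m\<close> by (intro mult_left_mono) auto
  also have "\<dots> = ((1 - \<alpha> + \<alpha>\<^sup>2 / 4) * (1 + 1 / (8 * m))) * mean_gap v s" by simp
  also have "\<dots> \<le> (1 - 0.2348 / sqrt m)\<^sup>2 * mean_gap v s"
    using contraction_factor_bound[OF \<open>2 \<le> m\<close> \<alpha>_bounds(1,2)] \<open>0 < mean_gap v s\<close>
    by (intro mult_right_mono) auto
  finally show "mean_gap (\<lambda>i. v i + \<alpha> * u i + u' i) (\<lambda>i. s i + \<alpha> * w i + w' i)
      \<le> (1 - 0.2348 / sqrt (real CARD('i)))\<^sup>2 * mean_gap v s"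
    by (simp add: m_def)
qed

section \<open>The algorithm on states\<close>

definition v_part :: "'n::finite ipm_state \<Rightarrow> 'n + 'n \<Rightarrow> real" where
  "v_part x = (case x of (z, \<gamma>, \<theta>, \<phi>, \<psi>) \<Rightarrow> case_sum (vec_nth \<gamma>) (vec_nth \<theta>))"

definition s_part :: "'n::finite ipm_state \<Rightarrow> 'n + 'n \<Rightarrow> real" where
  "s_part x = (case x of (z, \<gamma>, \<theta>, \<phi>, \<psi>) \<Rightarrow> case_sum (vec_nth \<phi>) (vec_nth \<psi>))"

lemma v_part_add [simp]: "v_part (x + d) = (\<lambda>j. v_part x j + v_part d j)"
  by (cases x; cases d) (auto simp: v_part_def fun_eq_iff split: sum.split)

lemma s_part_add [simp]: "s_part (x + d) = (\<lambda>j. s_part x j + s_part d j)"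
  by (cases x; cases d) (auto simp: s_part_def fun_eq_iff split: sum.split)

lemma v_part_scaleR [simp]: "v_part (c *\<^sub>R x) = (\<lambda>j. c * v_part x j)"
  by (cases x) (auto simp: v_part_def fun_eq_iff split: sum.split)

lemma s_part_scaleR [simp]: "s_part (c *\<^sub>R x) = (\<lambda>j. c * s_part x j)"
  by (cases x) (auto simp: s_part_def fun_eq_iff split: sum.split)

lemma vts_eq_sum: "vts x = (\<Sum>j\<in>UNIV. v_part x j * s_part x j)"
  by (cases x) (simp add: vts_def v_part_def s_part_def sum_UNIV_Plus inner_vec_def)

lemma mu_eq_mean_gap: "mu x = mean_gap (v_part x) (s_part x)"
  unfolding mu_def mean_gap_def vts_eq_sum by simp

lemma dev_eq_L2_set: "dev d = L2_set (\<lambda>j. v_part d j * s_part d j - mu d) UNIV"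
  by (cases d) (simp add: dev_def L2_set_def v_part_def s_part_def sum_UNIV_Plus sum.distrib)

lemma newton_sys_complementarity:
  assumes "newton_sys H lam \<sigma> m x d"
  shows "s_part x j * v_part d j + v_part x j * s_part d j = \<sigma> * m - v_part x j * s_part x j"
  using assms by (cases x; cases d; cases j) (auto simp: newton_sys_def v_part_def s_part_def)

lemma newton_sys_product_nonneg:
  fixes H :: "real^'n^'n" and x d :: "'n::finite ipm_state"
  assumes psd: "\<forall>x. 0 \<le> x \<bullet> (H *v x)" and "0 \<le> lam" and "newton_sys H lam \<sigma> m x d"
  shows "0 \<le> (\<Sum>j\<in>UNIV. v_part d j * s_part d j)"
proof -
  obtain dz d\<gamma> d\<theta> d\<phi> d\<psi> where d: "d = (dz, d\<gamma>, d\<theta>, d\<phi>, d\<psi>)" by (cases d)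
  obtain z \<gamma> \<theta> \<phi> \<psi> where x: "x = (z, \<gamma>, \<theta>, \<phi>, \<psi>)" by (cases x)
  have "(2 * lam) *\<^sub>R (H *v dz) + d\<gamma> - d\<theta> = 0" "dz + d\<phi> = 0" "- dz + d\<psi> = 0"
    using assms(3) by (simp_all add: newton_sys_def d x)
  then have dual: "d\<gamma> - d\<theta> = - ((2 * lam) *\<^sub>R (H *v dz))" and "d\<phi> = - dz" and "d\<psi> = dz"
    by (simp_all add: algebra_simps eq_neg_iff_add_eq_0)
  have "(\<Sum>j\<in>UNIV. v_part d j * s_part d j) = d\<gamma> \<bullet> d\<phi> + d\<theta> \<bullet> d\<psi>"
    by (simp add: vts_eq_sum[symmetric] vts_def d)
  also have "\<dots> = - ((d\<gamma> - d\<theta>) \<bullet> dz)"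
    by (simp add: \<open>d\<phi> = - dz\<close> \<open>d\<psi> = dz\<close> inner_diff_left)
  also have "\<dots> = 2 * lam * (dz \<bullet> (H *v dz))" by (simp add: dual inner_commute)
  finally show ?thesis using psd \<open>0 \<le> lam\<close> by simp
qed

lemma pc_step_central:
  fixes H :: "real^'n^'n" and x x' :: "'n::finite ipm_state"
  assumes psd: "\<forall>x. 0 \<le> x \<bullet> (H *v x)" and lam: "0 \<le> lam"
    and central: "central_nbhd (1/4) (v_part x) (s_part x)"
    and step: "pc_step H lam x x'"
  shows "central_nbhd (1/4) (v_part x') (s_part x')"
    and "mu x' \<le> (1 - 0.2348 / sqrt (2 * real CARD('n)))\<^sup>2 * mu x"
proof -
  obtain dp dc where pred: "newton_sys H lam 0 (mu x) x dp"
    and corr: "newton_sys H lam 1 (mu (x + step_alpha (mu x) (dev dp) *\<^sub>R dp))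
                 (x + step_alpha (mu x) (dev dp) *\<^sub>R dp) dc"
    and x': "x' = x + step_alpha (mu x) (dev dp) *\<^sub>R dp + dc"
    using step unfolding pc_step_def Let_def by blast
  define \<alpha> where "\<alpha> = step_alpha (mu x) (dev dp)"
  define xh where "xh = x + \<alpha> *\<^sub>R dp"
  have v_xh: "v_part xh = (\<lambda>j. v_part x j + \<alpha> * v_part dp j)"
    and s_xh: "s_part xh = (\<lambda>j. s_part x j + \<alpha> * s_part dp j)" by (simp_all add: xh_def)
  have card: "real CARD('n + 'n) = 2 * real CARD('n)" by simp
  have "0 < CARD('n)" by (simp add: finite_UNIV_card_ge_0)
  then have "2 \<le> CARD('n + 'n)" unfolding card_sum by linarith
  have pred_eq: "s_part x j * v_part dp j + v_part x j * s_part dp j = - (v_part x j * s_part x j)"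
    for j using newton_sys_complementarity[OF pred] by simp
  have \<alpha>_eq: "\<alpha> = step_alpha (mean_gap (v_part x) (s_part x))
      (L2_set (\<lambda>j. v_part dp j * s_part dp j - mean_gap (v_part dp) (s_part dp)) UNIV)"
    by (simp add: \<alpha>_def dev_eq_L2_set mu_eq_mean_gap)
  have corr_eq: "(s_part x j + \<alpha> * s_part dp j) * v_part dc j + (v_part x j + \<alpha> * v_part dp j) * s_part dc j
      = mean_gap (\<lambda>j. v_part x j + \<alpha> * v_part dp j) (\<lambda>j. s_part x j + \<alpha> * s_part dp j)
        - (v_part x j + \<alpha> * v_part dp j) * (s_part x j + \<alpha> * s_part dp j)" for j
    using newton_sys_complementarity[OF corr[folded \<alpha>_def xh_def], of j]
    by (simp add: mu_eq_mean_gap v_xh s_xh)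
  note result = predictor_corrector_step[OF \<open>2 \<le> CARD('n + 'n)\<close> central pred_eq
      newton_sys_product_nonneg[OF psd lam pred] \<alpha>_eq corr_eq
      newton_sys_product_nonneg[OF psd lam corr], unfolded card]
  have v_x': "v_part x' = (\<lambda>j. v_part x j + \<alpha> * v_part dp j + v_part dc j)"
    and s_x': "s_part x' = (\<lambda>j. s_part x j + \<alpha> * s_part dp j + s_part dc j)"
    by (simp_all add: x' \<alpha>_def)
  show "central_nbhd (1/4) (v_part x') (s_part x')"
    unfolding v_x' s_x' by (rule result(1))
  show "mu x' \<le> (1 - 0.2348 / sqrt (2 * real CARD('n)))\<^sup>2 * mu x"
    unfolding mu_eq_mean_gap v_x' s_x' by (rule result(2))
qed

lemma initial_point_central:
  fixes h :: "real^'n::finite" and x :: "'n ipm_state"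
  assumes "h \<noteq> 0" and lam: "lam = 1 / (4 * sqrt 2 * norm h)"
    and x: "x = (0, ones - lam *\<^sub>R h, ones + lam *\<^sub>R h, ones, ones)"
  shows "mu x = 1" and "central_nbhd (1/4) (v_part x) (s_part x)"
proof -
  have prod_Inl: "v_part x (Inl i) * s_part x (Inl i) = 1 - lam * h$i"
    and prod_Inr: "v_part x (Inr i) * s_part x (Inr i) = 1 + lam * h$i" for i
    by (simp_all add: x v_part_def s_part_def ones_def)
  have "(\<Sum>j\<in>UNIV. v_part x j * s_part x j) = (\<Sum>i\<in>(UNIV::'n set). 2)"
    by (simp add: sum_UNIV_Plus prod_Inl prod_Inr sum.distrib[symmetric])
  then have mean: "mean_gap (v_part x) (s_part x) = 1" by (simp add: mean_gap_def)
  then show "mu x = 1" by (simp add: mu_eq_mean_gap)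
  have "(\<Sum>j\<in>UNIV. (v_part x j * s_part x j - 1)\<^sup>2) = 2 * lam\<^sup>2 * (\<Sum>i\<in>UNIV. (h$i)\<^sup>2)"
    by (simp add: sum_UNIV_Plus prod_Inl prod_Inr sum_distrib_left power_mult_distrib mult.assoc)
  also have "\<dots> = 2 * (lam * norm h)\<^sup>2"
    by (simp add: norm_vec_def L2_set_def sum_nonneg power_mult_distrib)
  also have "\<dots> = (1/4)\<^sup>2" using \<open>h \<noteq> 0\<close> by (simp add: lam power2_eq_square)
  finally show "central_nbhd (1/4) (v_part x) (s_part x)"
    by (simp add: central_nbhd_def mean L2_set_def)
qed

lemma one_minus_div_sqrt_bounds:
  fixes c m :: real
  assumes "0 < c" "c < 1" "1 \<le> m"
  shows "0 < 1 - c / sqrt m" and "1 - c / sqrt m < 1"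
proof -
  have "1 \<le> sqrt m" using assms(3) by simp
  then have "c / sqrt m \<le> c" using assms(1) by (simp add: divide_le_eq del: real_sqrt_ge_1_iff)
  then show "0 < 1 - c / sqrt m" using assms(2) by simp
  show "1 - c / sqrt m < 1" using assms(1,3) by simp
qed

lemma geometric_decay_reaches:
  fixes q \<epsilon> M :: real and k :: nat
  assumes q: "0 < q" "q < 1" and "0 < \<epsilon>" "0 < M"
    and k: "nat \<lceil>ln (M / \<epsilon>) / (- 2 * ln q)\<rceil> \<le> k"
  shows "M * (q\<^sup>2) ^ k \<le> \<epsilon>"
proof -
  have "0 < - 2 * ln q" using q by simp
  have "ln (M / \<epsilon>) / (- 2 * ln q) \<le> real k"
    using real_nat_ceiling_ge of_nat_mono[OF k] by (rule order_trans)
  then have "ln (M / \<epsilon>) \<le> real k * (- 2 * ln q)"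
    by (subst (asm) pos_divide_le_eq[OF \<open>0 < - 2 * ln q\<close>])
  then have "ln ((q\<^sup>2) ^ k) \<le> ln (\<epsilon> / M)"
    using q \<open>0 < \<epsilon>\<close> \<open>0 < M\<close> by (simp add: ln_realpow ln_div algebra_simps)
  then have "(q\<^sup>2) ^ k \<le> \<epsilon> / M" using q \<open>0 < \<epsilon>\<close> \<open>0 < M\<close> by simp
  then show ?thesis using \<open>0 < M\<close> by (simp add: pos_le_divide_eq mult.commute)
qed

theorem theorem1:
  fixes H :: "real^'n^'n" and h :: "real^'n" and lam \<epsilon> :: real
    and X :: "nat \<Rightarrow> 'n::finite ipm_state"
  assumes "transpose H = H"
    and "\<forall>x. 0 \<le> x \<bullet> (H *v x)"
    and "h \<noteq> 0"
    and "lam = 1 / (4 * sqrt 2 * norm h)"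
    and "\<epsilon> > 0"
    and "X 0 = (0, ones - lam *\<^sub>R h, ones + lam *\<^sub>R h, ones, ones)"
    and "\<forall>k. pc_step H lam (X k) (X (Suc k))"
  shows "(\<forall>k. mu (X (Suc k)) \<le> (1 - 0.2348 / sqrt (2 * real CARD('n)))\<^sup>2 * mu (X k)) \<and>
         (\<forall>k. k \<ge> nat \<lceil>ln (2 * real CARD('n) / \<epsilon>)
                 / (- 2 * ln (1 - 0.2348 / sqrt (2 * real CARD('n))))\<rceil>
              \<longrightarrow> vts (X k) \<le> \<epsilon>)"
proof -
  define q where "q = 1 - 0.2348 / sqrt (2 * real CARD('n))"
  have "0 < CARD('n)" by (simp add: finite_UNIV_card_ge_0)
  then have "1 \<le> 2 * real CARD('n)" by linarith
  then have "0 < q" "q < 1"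
    unfolding q_def by (intro one_minus_div_sqrt_bounds; simp)+
  have "0 \<le> lam" using assms(4) by simp
  note init = initial_point_central[OF assms(3,4,6)]
  note step = pc_step_central[OF assms(2) \<open>0 \<le> lam\<close> _ assms(7)[rule_format]]
  have central: "central_nbhd (1/4) (v_part (X k)) (s_part (X k))" for k
    by (induction k) (use init step in auto)
  have contraction: "mu (X (Suc k)) \<le> q\<^sup>2 * mu (X k)" for k
    using step(2)[OF central] by (simp add: q_def)
  have decay: "mu (X k) \<le> (q\<^sup>2) ^ k" for k
  proof (induction k)
    case (Suc k)
    then show ?case using contraction[of k] mult_left_mono[OF Suc, of "q\<^sup>2"] by simp
  qed (simp add: init)
  have "vts (X k) \<le> \<epsilon>" if "nat \<lceil>ln (2 * real CARD('n) / \<epsilon>) / (- 2 * ln q)\<rceil> \<le> k" for k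
  proof -
    have "vts (X k) = 2 * real CARD('n) * mu (X k)" by (simp add: mu_def)
    also have "\<dots> \<le> 2 * real CARD('n) * (q\<^sup>2) ^ k" using decay by simp
    also have "\<dots> \<le> \<epsilon>"
      using geometric_decay_reaches[OF \<open>0 < q\<close> \<open>q < 1\<close> assms(5) _ that] \<open>0 < CARD('n)\<close> by simp
    finally show ?thesis .
  qed
  with contraction show ?thesis unfolding q_def by blast
qed

end
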